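(* For each $n \geq 3$, $\operatorname{ssp}(K_n) \geq n$.
   Context: A family $\mathcal{P}$ of paths in a graph $G$ is strong-separating if for every ordered pair of distinct edges $e,f$ of $G$ there is a path in $\mathcal{P}$ containing $e$ but not $f$; $\operatorname{ssp}(G)$ is the minimum size of such a family. $K_n$ is the complete graph on $n$ vertices. *)

theory Defs
  imports Main
begin

definition complete_graph_edges :: "nat \<Rightarrow> nat set set" where
  "complete_graph_edges n = {{u, v} | u v. u < n \<and> v < n \<and> u \<noteq> v}"

definition is_path :: "'a set set \<Rightarrow> 'a list \<Rightarrow> bool" where
  "is_path E p \<longleftrightarrow> p \<noteq> [] \<and> distinct p \<and>
     (\<forall>i. Suc i < length p \<longrightarrow> {p ! i, p ! Suc i} \<in> E)"

definition path_edges :: "'a list \<Rightarrow> 'a set set" where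
  "path_edges p = {{p ! i, p ! Suc i} | i. Suc i < length p}"

definition strong_separating :: "'a set set \<Rightarrow> 'a list set \<Rightarrow> bool" where
  "strong_separating E P \<longleftrightarrow> (\<forall>p\<in>P. is_path E p) \<and>
     (\<forall>e\<in>E. \<forall>f\<in>E. e \<noteq> f \<longrightarrow> (\<exists>p\<in>P. e \<in> path_edges p \<and> f \<notin> path_edges p))"

definition ssp :: "'a set set \<Rightarrow> nat" where
  "ssp E = (LEAST k. \<exists>P. finite P \<and> card P = k \<and> strong_separating E P)"

end

theory Submission
  imports Defs
begin

(* Double counting at a vertex x. Each path p through x spreads a total weight 2 over its one or
   two edges at x: weight 2 if x is an end of p, weight 1 on each edge otherwise. So the load on
   the n - 1 edges at x adds up to twice the number of paths through x. In a strong-separating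
   family every edge e at x has load at least 2: some path p contains e, and if x is interior to p,
   separating e from the other edge of p at x yields a second path containing e. Hence at least
   n - 1 paths pass through every vertex. One further path is forced: a path consisting of a single
   edge misses some vertex, and otherwise the first edge of a longer path has load at least 3 at
   its end vertex, because separating it from the second edge yields a further path. *)

definition path_edges_at :: "'a \<Rightarrow> 'a list \<Rightarrow> 'a set set" where
  "path_edges_at x p = {e \<in> path_edges p. x \<in> e}"

definition incidence_weight :: "'a \<Rightarrow> 'a list \<Rightarrow> nat" where
  "incidence_weight x p = (if card (path_edges_at x p) = 1 then 2 else 1)"

definition edge_load :: "'a list set \<Rightarrow> 'a \<Rightarrow> 'a set \<Rightarrow> nat" where
  "edge_load P x e = (\<Sum>p\<in>P. if e \<in> path_edges_at x p then incidence_weight x p else 0)"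

definition incident_edges :: "'a set set \<Rightarrow> 'a \<Rightarrow> 'a set set" where
  "incident_edges E x = {e \<in> E. x \<in> e}"

definition paths_through :: "'a list set \<Rightarrow> 'a \<Rightarrow> 'a list set" where
  "paths_through P x = {p \<in> P. path_edges_at x p \<noteq> {}}"

lemma finite_path_edges: "finite (path_edges p)"
proof -
  have "path_edges p = (\<lambda>i. {p ! i, p ! Suc i}) ` {i. Suc i < length p}"
    unfolding path_edges_def by auto
  moreover have "{i. Suc i < length p} \<subseteq> {..<length p}" by auto
  ultimately show ?thesis using finite_subset by fastforce
qed

lemma finite_path_edges_at: "finite (path_edges_at x p)"
  unfolding path_edges_at_def by (rule finite_subset[OF _ finite_path_edges]) auto

lemma is_path_distinct: "is_path E p \<Longrightarrow> distinct p"
  unfolding is_path_def by blast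

lemma path_edges_subset: "is_path E p \<Longrightarrow> path_edges p \<subseteq> E"
  unfolding is_path_def path_edges_def by auto

lemma path_edges_at_eq_empty: "x \<notin> set p \<Longrightarrow> path_edges_at x p = {}"
  unfolding path_edges_at_def path_edges_def by (auto dest: Suc_lessD)

lemma strong_separating_is_path: "strong_separating E P \<Longrightarrow> p \<in> P \<Longrightarrow> is_path E p"
  unfolding strong_separating_def by blast

lemma strong_separatingD:
  "strong_separating E P \<Longrightarrow> e \<in> E \<Longrightarrow> f \<in> E \<Longrightarrow> e \<noteq> f
    \<Longrightarrow> \<exists>p\<in>P. e \<in> path_edges p \<and> f \<notin> path_edges p"
  unfolding strong_separating_def by blast

lemma card_path_edges_at_le_2:
  assumes "distinct p"
  shows "card (path_edges_at x p) \<le> 2"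
proof (cases "x \<in> set p")
  case False
  then show ?thesis by (simp add: path_edges_at_eq_empty)
next
  case True
  then obtain j where j: "j < length p" "p ! j = x" by (auto simp: in_set_conv_nth)
  have "path_edges_at x p \<subseteq> {{p ! (j - 1), p ! j}, {p ! j, p ! Suc j}}"
  proof
    fix e assume "e \<in> path_edges_at x p"
    then obtain i where i: "Suc i < length p" "e = {p ! i, p ! Suc i}" "x \<in> e"
      unfolding path_edges_at_def path_edges_def by auto
    then have "i = j \<or> Suc i = j"
      using assms j nth_eq_iff_index_eq by (metis Suc_lessD insert_iff singletonD)
    then show "e \<in> {{p ! (j - 1), p ! j}, {p ! j, p ! Suc j}}" using i by auto
  qed
  then have "card (path_edges_at x p) \<le> card {{p ! (j - 1), p ! j}, {p ! j, p ! Suc j}}"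
    by (intro card_mono) auto
  also have "\<dots> \<le> 2" by (simp add: card_insert_le_m1)
  finally show ?thesis .
qed

lemma path_edges_at_first:
  assumes "distinct p" "2 \<le> length p"
  shows "path_edges_at (p ! 0) p = {{p ! 0, p ! 1}}"
proof -
  have "i = 0" if "Suc i < length p" "p ! 0 \<in> {p ! i, p ! Suc i}" for i
    using that nth_eq_iff_index_eq[OF assms(1)] by fastforce
  then show ?thesis
    using assms(2) unfolding path_edges_at_def path_edges_def by fastforce
qed

lemma card_path_edges_at_mult_incidence_weight:
  assumes "distinct p"
  shows "card (path_edges_at x p) * incidence_weight x p = (if path_edges_at x p = {} then 0 else 2)"
  using card_path_edges_at_le_2[OF assms, of x] finite_path_edges_at[of x p]
  unfolding incidence_weight_def
  by (cases "card (path_edges_at x p)") (auto simp: numeral_2_eq_2 le_Suc_eq)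

lemma sum_edge_load:
  assumes "finite E" "finite P" "\<forall>p\<in>P. is_path E p"
  shows "(\<Sum>e\<in>incident_edges E x. edge_load P x e) = 2 * card (paths_through P x)"
proof -
  have weights: "(\<Sum>e\<in>incident_edges E x. if e \<in> path_edges_at x p then incidence_weight x p else 0)
      = (if path_edges_at x p = {} then 0 else 2)" if "p \<in> P" for p
  proof -
    have "path_edges_at x p \<subseteq> incident_edges E x"
      using path_edges_subset assms(3) that
      unfolding path_edges_at_def incident_edges_def by blast
    then have "(\<Sum>e\<in>incident_edges E x. if e \<in> path_edges_at x p then incidence_weight x p else 0)
        = (\<Sum>e\<in>path_edges_at x p. incidence_weight x p)"
      using assms(1) by (simp add: sum.If_cases incident_edges_def Int_absorb1)
    also have "\<dots> = (if path_edges_at x p = {} then 0 else 2)"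
      using card_path_edges_at_mult_incidence_weight[OF is_path_distinct[of E p]] assms(3) that by simp
    finally show ?thesis .
  qed
  have "(\<Sum>e\<in>incident_edges E x. edge_load P x e)
      = (\<Sum>p\<in>P. \<Sum>e\<in>incident_edges E x.
          if e \<in> path_edges_at x p then incidence_weight x p else 0)"
    unfolding edge_load_def by (rule sum.swap)
  also have "\<dots> = (\<Sum>p\<in>P. if path_edges_at x p = {} then 0 else 2)"
    using weights by simp
  also have "\<dots> = 2 * card (paths_through P x)"
    using assms(2) by (simp add: sum.If_cases paths_through_def Collect_neg_eq[symmetric] Int_def)
  finally show ?thesis .
qed

lemma sum_incidence_weight_le_edge_load:
  assumes "finite P" "Q \<subseteq> P" "\<forall>q\<in>Q. e \<in> path_edges_at x q"
  shows "(\<Sum>q\<in>Q. incidence_weight x q) \<le> edge_load P x e"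
proof -
  have "(\<Sum>q\<in>Q. incidence_weight x q)
      = (\<Sum>q\<in>Q. if e \<in> path_edges_at x q then incidence_weight x q else 0)"
    using assms(3) by simp
  also have "\<dots> \<le> edge_load P x e"
    unfolding edge_load_def using assms(1,2) by (rule sum_mono2) auto
  finally show ?thesis .
qed

lemma edge_load_ge_2:
  assumes "finite P" "strong_separating E P" "p \<in> P" "e \<in> path_edges_at x p"
  shows "2 \<le> edge_load P x e"
proof (cases "card (path_edges_at x p) = 1")
  case True
  then show ?thesis
    using sum_incidence_weight_le_edge_load[of P "{p}" e x] assms
    unfolding incidence_weight_def by simp
next
  case False
  have p_path: "is_path E p" using assms(2,3) by (rule strong_separating_is_path)
  have "card (path_edges_at x p) \<noteq> 0"
    using assms(4) finite_path_edges_at[of x p] by (auto simp: card_eq_0_iff)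
  moreover note card_path_edges_at_le_2[OF is_path_distinct[OF p_path], of x]
  ultimately have "card (path_edges_at x p) = 2" using False by linarith
  then obtain h where h: "h \<in> path_edges_at x p" "h \<noteq> e"
    using assms(4) by (metis card_2_iff insert_iff)
  have "e \<in> E" "h \<in> E"
    using assms(4) h(1) path_edges_subset[OF p_path] unfolding path_edges_at_def by auto
  then obtain q where q: "q \<in> P" "e \<in> path_edges q" "h \<notin> path_edges q"
    using strong_separatingD[OF assms(2)] h(2) by blast
  have "q \<noteq> p" using q(3) h(1) unfolding path_edges_at_def by auto
  moreover have "e \<in> path_edges_at x q" using q(2) assms(4) unfolding path_edges_at_def by auto
  ultimately have "(\<Sum>r\<in>{p, q}. incidence_weight x r) \<le> edge_load P x e"
    using sum_incidence_weight_le_edge_load[of P "{p, q}"] assms q(1) by simp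
  moreover have "(\<Sum>r\<in>{p, q}. incidence_weight x r) \<ge> 2"
    using \<open>q \<noteq> p\<close> unfolding incidence_weight_def by simp
  ultimately show ?thesis by linarith
qed

lemma edge_load_first_edge_ge_3:
  assumes "finite P" "strong_separating E P" "p \<in> P" "3 \<le> length p"
  shows "3 \<le> edge_load P (p ! 0) {p ! 0, p ! 1}"
proof -
  let ?e = "{p ! 0, p ! 1}" and ?f = "{p ! 1, p ! 2}"
  have p_path: "is_path E p" using assms(2,3) by (rule strong_separating_is_path)
  then have "distinct p" by (rule is_path_distinct)
  moreover have "2 \<le> length p" using assms(4) by simp
  ultimately have p_at: "path_edges_at (p ! 0) p = {?e}"
    by (rule path_edges_at_first)
  have "?f \<in> path_edges p"
    using assms(4) unfolding path_edges_def by (auto intro!: exI[of _ 1] simp: numeral_2_eq_2)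
  moreover have "?e \<noteq> ?f"
  proof -
    have "0 < length p" "1 < length p" "2 < length p" using assms(4) by linarith+
    then have "p ! 0 \<noteq> p ! 1" "p ! 0 \<noteq> p ! 2"
      using nth_eq_iff_index_eq[OF \<open>distinct p\<close>, of 0 1]
        nth_eq_iff_index_eq[OF \<open>distinct p\<close>, of 0 2] by simp_all
    then show ?thesis by (auto simp: doubleton_eq_iff)
  qed
  moreover have "?e \<in> path_edges p" using p_at unfolding path_edges_at_def by blast
  ultimately obtain q where q: "q \<in> P" "?e \<in> path_edges q" "?f \<notin> path_edges q"
    using strong_separatingD[OF assms(2)] path_edges_subset[OF p_path] by blast
  have "q \<noteq> p" using q(3) \<open>?f \<in> path_edges p\<close> by blast
  moreover have "?e \<in> path_edges_at (p ! 0) q" using q(2) unfolding path_edges_at_def by simp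
  ultimately have "(\<Sum>r\<in>{p, q}. incidence_weight (p ! 0) r) \<le> edge_load P (p ! 0) ?e"
    using sum_incidence_weight_le_edge_load[of P "{p, q}"] assms(1,3) q(1) p_at by simp
  moreover have "(\<Sum>r\<in>{p, q}. incidence_weight (p ! 0) r) \<ge> 3"
    using \<open>q \<noteq> p\<close> p_at unfolding incidence_weight_def by simp
  ultimately show ?thesis by linarith
qed

lemma incident_edge_load_ge_2:
  assumes "finite E" "finite P" "strong_separating E P"
    and "2 \<le> card (incident_edges E x)" "e \<in> incident_edges E x"
  shows "2 \<le> edge_load P x e"
proof -
  have "\<not> incident_edges E x \<subseteq> {e}"
    using assms(4) card_mono[of "{e}" "incident_edges E x"] by auto
  then obtain f where "f \<in> E" "f \<noteq> e" unfolding incident_edges_def by blast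
  then obtain p where p: "p \<in> P" "e \<in> path_edges p"
    using strong_separatingD[OF assms(3)] assms(5) unfolding incident_edges_def by blast
  have "e \<in> path_edges_at x p"
    using p(2) assms(5) unfolding path_edges_at_def incident_edges_def by blast
  from edge_load_ge_2[OF assms(2,3) p(1) this] show ?thesis .
qed

lemma degree_edge_load_le_card_paths_through:
  assumes "finite E" "finite P" "strong_separating E P"
    and "2 \<le> card (incident_edges E x)" "e \<in> incident_edges E x"
  shows "2 * (card (incident_edges E x) - 1) + edge_load P x e \<le> 2 * card (paths_through P x)"
proof -
  let ?I = "incident_edges E x"
  have fin: "finite ?I" using assms(1) unfolding incident_edges_def by simp
  have "2 * card (?I - {e}) \<le> (\<Sum>f\<in>?I - {e}. edge_load P x f)"
    using sum_bounded_below[of "?I - {e}" 2 "edge_load P x"] incident_edge_load_ge_2[OF assms(1-4)]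
    by (simp add: mult.commute)
  moreover have "(\<Sum>f\<in>?I. edge_load P x f) = edge_load P x e + (\<Sum>f\<in>?I - {e}. edge_load P x f)"
    using fin assms(5) by (rule sum.remove)
  moreover have "(\<Sum>f\<in>?I. edge_load P x f) = 2 * card (paths_through P x)"
    using strong_separating_is_path[OF assms(3)] by (intro sum_edge_load[OF assms(1,2)]) blast
  moreover have "card (?I - {e}) = card ?I - 1"
    using assms(5) by (rule card_Diff_singleton)
  ultimately show ?thesis by linarith
qed

lemma degree_le_card_paths_through:
  assumes "finite E" "finite P" "strong_separating E P" "2 \<le> card (incident_edges E x)"
  shows "card (incident_edges E x) \<le> card (paths_through P x)"
proof -
  have "incident_edges E x \<noteq> {}" using assms(4) by auto
  then obtain e where e: "e \<in> incident_edges E x" by blast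
  show ?thesis
    using degree_edge_load_le_card_paths_through[OF assms e] incident_edge_load_ge_2[OF assms e] by linarith
qed

lemma degree_less_card_paths_through_first:
  assumes "finite E" "finite P" "strong_separating E P" "2 \<le> card (incident_edges E (p ! 0))"
    and "p \<in> P" "3 \<le> length p"
  shows "card (incident_edges E (p ! 0)) < card (paths_through P (p ! 0))"
proof -
  have "{p ! 0, p ! 1} \<in> path_edges p"
    using assms(6) unfolding path_edges_def by force
  then have "{p ! 0, p ! 1} \<in> incident_edges E (p ! 0)"
    using path_edges_subset[OF strong_separating_is_path[OF assms(3,5)]]
    unfolding incident_edges_def by auto
  from degree_edge_load_le_card_paths_through[OF assms(1-4) this] edge_load_first_edge_ge_3[OF assms(2,3,5,6)]
  show ?thesis by linarith
qed

definition single_edge_paths :: "'a set set \<Rightarrow> 'a list set" where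
  "single_edge_paths E = {[u, v] | u v. {u, v} \<in> E \<and> u \<noteq> v}"

lemma path_edges_single_edge: "path_edges [u, v] = {{u, v}}"
  unfolding path_edges_def by auto

lemma strong_separating_single_edge_paths:
  assumes "\<forall>e\<in>E. card e = 2"
  shows "strong_separating E (single_edge_paths E)"
  unfolding strong_separating_def
proof (intro conjI ballI impI)
  fix p assume "p \<in> single_edge_paths E"
  then show "is_path E p"
    unfolding single_edge_paths_def is_path_def by (auto simp: less_Suc_eq)
next
  fix e f assume "e \<in> E" "f \<in> E" "e \<noteq> f"
  then obtain u v where uv: "e = {u, v}" "u \<noteq> v" using assms by (meson card_2_iff)
  then have "[u, v] \<in> single_edge_paths E"
    using \<open>e \<in> E\<close> unfolding single_edge_paths_def by blast
  moreover have "e \<in> path_edges [u, v]" "f \<notin> path_edges [u, v]"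
    using uv(1) \<open>e \<noteq> f\<close> by (simp_all add: path_edges_single_edge)
  ultimately show "\<exists>p\<in>single_edge_paths E. e \<in> path_edges p \<and> f \<notin> path_edges p"
    by blast
qed

lemma finite_single_edge_paths:
  assumes "finite E" "\<forall>e\<in>E. card e = 2"
  shows "finite (single_edge_paths E)"
proof -
  have "finite e" if "e \<in> E" for e
    using assms(2) that card.infinite by fastforce
  then have "finite (\<Union>E)" using assms(1) by blast
  moreover have "single_edge_paths E \<subseteq> (\<lambda>(u, v). [u, v]) ` (\<Union>E \<times> \<Union>E)"
    unfolding single_edge_paths_def by auto
  ultimately show ?thesis by (auto intro: finite_subset)
qed

lemma ssp_attained:
  assumes "finite E" "\<forall>e\<in>E. card e = 2"
  obtains P where "finite P" "card P = ssp E" "strong_separating E P"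
proof -
  let ?Q = "\<lambda>k. \<exists>P. finite P \<and> card P = k \<and> strong_separating E P"
  have "?Q (card (single_edge_paths E))"
    using finite_single_edge_paths[OF assms] strong_separating_single_edge_paths[OF assms(2)] by blast
  then have "?Q (ssp E)" unfolding ssp_def by (rule LeastI)
  then show ?thesis using that by blast
qed

lemma finite_complete_graph_edges: "finite (complete_graph_edges n)"
proof -
  have "complete_graph_edges n \<subseteq> Pow {..<n}" unfolding complete_graph_edges_def by auto
  then show ?thesis by (rule finite_subset) simp
qed

lemma complete_graph_edgeI:
  "u < n \<Longrightarrow> v < n \<Longrightarrow> u \<noteq> v \<Longrightarrow> {u, v} \<in> complete_graph_edges n"
  unfolding complete_graph_edges_def by blast

lemma complete_graph_edge_subset: "e \<in> complete_graph_edges n \<Longrightarrow> e \<subseteq> {..<n}"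
  unfolding complete_graph_edges_def by blast

lemma card_complete_graph_edge: "e \<in> complete_graph_edges n \<Longrightarrow> card e = 2"
  unfolding complete_graph_edges_def by auto

lemma card_incident_edges_complete_graph:
  assumes "x < n"
  shows "card (incident_edges (complete_graph_edges n) x) = n - 1"
proof -
  have "incident_edges (complete_graph_edges n) x = (\<lambda>u. {x, u}) ` ({..<n} - {x})"
    unfolding incident_edges_def complete_graph_edges_def using assms by fastforce
  moreover have "inj_on (\<lambda>u. {x, u}) ({..<n} - {x})"
    by (auto simp: inj_on_def doubleton_eq_iff)
  ultimately show ?thesis using assms by (simp add: card_image)
qed

lemma card_strong_separating_complete_graph:
  assumes "3 \<le> n" "finite P" "strong_separating (complete_graph_edges n) P"
  shows "n \<le> card P"
proof -
  let ?E = "complete_graph_edges n"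
  have degree: "card (incident_edges ?E x) = n - 1" "2 \<le> card (incident_edges ?E x)" if "x < n" for x
    using card_incident_edges_complete_graph[OF that] assms(1) by simp_all
  have "{0, 1} \<in> ?E" "{0, 2} \<in> ?E"
    using assms(1) by (simp_all add: complete_graph_edgeI)
  moreover have "{0::nat, 1} \<noteq> {0, 2}" by (simp add: doubleton_eq_iff)
  ultimately obtain p where p: "p \<in> P" "{0, 1} \<in> path_edges p"
    by (metis strong_separatingD[OF assms(3)])
  have p_path: "is_path ?E p" using strong_separating_is_path[OF assms(3) p(1)] .
  have "2 \<le> length p" using p(2) unfolding path_edges_def by fastforce
  then consider "length p = 2" | "3 \<le> length p" by linarith
  then show ?thesis
  proof cases
    case 1
    then have "card (set p) = 2" using is_path_distinct[OF p_path] by (simp add: distinct_card)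
    then have "\<not> {..<n} \<subseteq> set p" using assms(1) card_mono[of "set p" "{..<n}"] by auto
    then obtain x where x: "x < n" "x \<notin> set p" by blast
    have "paths_through P x \<subseteq> P - {p}"
      using path_edges_at_eq_empty[OF x(2)] unfolding paths_through_def by auto
    then have "card (paths_through P x) \<le> card P - 1"
      using assms(2) p(1) card_mono[of "P - {p}"] by fastforce
    then show ?thesis
      using degree_le_card_paths_through[OF finite_complete_graph_edges assms(2,3) degree(2)[OF x(1)]]
        degree(1)[OF x(1)] assms(1) by linarith
  next
    case 2
    have "{p ! 0, p ! 1} \<in> path_edges p"
      using 2 unfolding path_edges_def by force
    then have "p ! 0 < n"
      using path_edges_subset[OF p_path] complete_graph_edge_subset by blast
    have "card (paths_through P (p ! 0)) \<le> card P"
      using assms(2) unfolding paths_through_def by (intro card_mono) auto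
    then show ?thesis
      using degree_less_card_paths_through_first[OF finite_complete_graph_edges assms(2,3)
          degree(2)[OF \<open>p ! 0 < n\<close>] p(1) 2] degree(1)[OF \<open>p ! 0 < n\<close>] by linarith
  qed
qed

theorem proposition2p1:
  fixes n :: nat
  assumes "n \<ge> 3"
  shows "ssp (complete_graph_edges n) \<ge> n"
proof -
  have "\<forall>e\<in>complete_graph_edges n. card e = 2" using card_complete_graph_edge by blast
  with finite_complete_graph_edges obtain P where P: "finite P" "card P = ssp (complete_graph_edges n)"
      "strong_separating (complete_graph_edges n) P"
    by (rule ssp_attained)
  from card_strong_separating_complete_graph[OF assms P(1,3)] P(2) show ?thesis by simp
qed

end
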